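(* Consider the multivariate linear model ${\bf y}_i={B^*}^T{\bf x}_i+\boldsymbol\epsilon_i$, $i=1,\dots,n$, with $B^*=(\boldsymbol\beta^*_1,\dots,\boldsymbol\beta^*_r)\in\mathbb{R}^{p\times r}$ an $s$-sparse matrix (all of whose columns are sparse), errors $\boldsymbol\epsilon_i$ with mean zero independent of the covariates, and $E[X^TX/n]\in\mathbb{R}^{p\times p}$ positive definite. Fix a partition $D=(D_1,\dots,D_Q)$ of $\{1,\dots,r\}$ and $\gamma\ge0$. Define $$\acute B=(\acute{\boldsymbol\beta}_1,\dots,\acute{\boldsymbol\beta}_r)=\arg\min_{\boldsymbol\beta_1,\dots,\boldsymbol\beta_r\in\mathbb{R}^p} E\left(\frac{1}{2n}\sum_{i=1}^n\sum_{c=1}^r (y_{ic}-{\bf x}_i^T\boldsymbol\beta_c)^2+\frac{\gamma}{2n}\sum_{q=1}^Q\frac{1}{|D_q|}\sum_{l,m\in D_q}\|X(\boldsymbol\beta_l-\boldsymbol\beta_m)\|_2^2\right).$$ Then for every $q$ and $l\in D_q$, $$\acute{\boldsymbol\beta}_l=\boldsymbol\beta^*_l+\frac{2\gamma}{(1+2\gamma)|D_q|}\sum_{c\in D_q,\,c\neq l}(\boldsymbol\beta^*_c-\boldsymbol\beta^*_l).$$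
   Context: $X=({\bf x}_1,\dots,{\bf x}_n)^T\in\mathbb{R}^{n\times p}$ is the design matrix, $y_{ic}$ the $c$th coordinate of ${\bf y}_i$. "$s$-sparse" means $B^*$ has $s$ nonzero entries. The inner sum $\sum_{l,m\in D_q}$ runs over all ordered pairs in $D_q$. The expectation is over the data generated by the model. *)

theory Defs
  imports "HOL-Probability.Probability"
begin

text \<open>Response of sample i, coordinate c, in the multivariate linear model
  y_i = B*^T x_i + eps_i, where Bstar c is the c-th column of B*.\<close>
definition resp :: "(nat \<Rightarrow> 'w \<Rightarrow> real^'p) \<Rightarrow> (nat \<Rightarrow> 'w \<Rightarrow> real^'r) \<Rightarrow> ('r \<Rightarrow> real^'p)
    \<Rightarrow> nat \<Rightarrow> 'w \<Rightarrow> 'r \<Rightarrow> real" where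
  "resp x eps Bstar i \<omega> c = x i \<omega> \<bullet> Bstar c + eps i \<omega> $ c"

definition nnz :: "('r::finite \<Rightarrow> real^'p::finite) \<Rightarrow> nat" where
  "nnz B = card {(j, c). B c $ j \<noteq> 0}"

definition gram :: "'w measure \<Rightarrow> nat \<Rightarrow> (nat \<Rightarrow> 'w \<Rightarrow> real^'p) \<Rightarrow> 'p \<Rightarrow> 'p \<Rightarrow> real" where
  "gram M n x j k = integral\<^sup>L M (\<lambda>\<omega>. (\<Sum>i<n. x i \<omega> $ j * x i \<omega> $ k) / real n)"

definition pos_def :: "('p::finite \<Rightarrow> 'p \<Rightarrow> real) \<Rightarrow> bool" where
  "pos_def G \<longleftrightarrow> (\<forall>v::real^'p. v \<noteq> 0 \<longrightarrow> (\<Sum>j\<in>UNIV. \<Sum>k\<in>UNIV. v $ j * G j k * v $ k) > 0)"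

text \<open>The expected penalized objective; the groups of the partition are the
  elements of D; the inner double sum runs over ordered pairs.\<close>
definition objective ::
  "'w measure \<Rightarrow> nat \<Rightarrow> (nat \<Rightarrow> 'w \<Rightarrow> real^'p) \<Rightarrow> (nat \<Rightarrow> 'w \<Rightarrow> real^'r::finite)
    \<Rightarrow> ('r \<Rightarrow> real^'p) \<Rightarrow> 'r set set \<Rightarrow> real \<Rightarrow> ('r \<Rightarrow> real^'p) \<Rightarrow> real" where
  "objective M n x eps Bstar D \<gamma> B = integral\<^sup>L M (\<lambda>\<omega>.
      1 / (2 * real n) * (\<Sum>i<n. \<Sum>c\<in>UNIV. (resp x eps Bstar i \<omega> c - x i \<omega> \<bullet> B c)\<^sup>2)
    + \<gamma> / (2 * real n) * (\<Sum>q\<in>D. 1 / real (card q) *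
          (\<Sum>l\<in>q. \<Sum>m\<in>q. \<Sum>i<n. (x i \<omega> \<bullet> (B l - B m))\<^sup>2)))"

text \<open>Independence of two random variables with values in possibly different
  measurable spaces (the library's indep_var requires a common type): the
  sigma-algebras they generate are independent (cf. prob_space.indep_var_eq).\<close>
definition indep_rv :: "'w measure \<Rightarrow> 'a measure \<Rightarrow> ('w \<Rightarrow> 'a) \<Rightarrow> 'b measure \<Rightarrow> ('w \<Rightarrow> 'b) \<Rightarrow> bool" where
  "indep_rv M S X T Y \<longleftrightarrow>
     X \<in> measurable M S \<and> Y \<in> measurable M T \<and>
     prob_space.indep_set M
       (sigma_sets (space M) {X -` A \<inter> space M | A. A \<in> sets S})
       (sigma_sets (space M) {Y -` A \<inter> space M | A. A \<in> sets T})"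

end

theory Submission
  imports Defs
begin

text \<open>The expected objective is a quadratic function of \<open>B\<close>. Write \<open>B = B0 + H\<close>, where
  \<open>B0\<close> is the claimed minimiser. The term linear in \<open>H\<close> splits into a noise part, whose
  expectation vanishes because the errors are centred and independent of the covariates, and a
  deterministic part, which vanishes because \<open>B0\<close> satisfies the first-order condition of the
  penalised least-squares problem blockwise. What remains is at least
  \<open>objective B0 + \<Sum>c. H c\<^sup>T E[X\<^sup>T X / n] H c / 2\<close>, so positive definiteness of the Gram matrix
  forces \<open>H = 0\<close>.\<close>

lemma sum_partition_on:
  assumes "partition_on A D" and "finite A"
  shows "sum f A = (\<Sum>q\<in>D. sum f q)"
proof -
  have "finite D" using assms finite_UnionD partition_onD1 by metis
  have "sum f (\<Union>D) = sum (sum f) D"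
    using assms \<open>finite D\<close>
    by (intro sum.Union_disjoint[simplified]) (auto simp: partition_on_def disjoint_def
        intro: finite_subset)
  then show ?thesis using partition_onD1[OF assms(1)] by simp
qed

lemma partition_on_the_block:
  assumes "partition_on A D" "q \<in> D" "l \<in> q"
  shows "(THE q. q \<in> D \<and> l \<in> q) = q"
  using assms partition_onD2[OF assms(1)]
  by (intro the_equality) (auto simp: disjoint_def)

text \<open>Within a block \<open>q\<close> this is \<open>(B l + 2\<gamma> \<cdot> mean\<^sub>q B) / (1 + 2\<gamma>)\<close>: each column is pulled towards
  the mean of its block.\<close>

definition group_shrink :: "'r set set \<Rightarrow> real \<Rightarrow> ('r \<Rightarrow> 'a::real_vector) \<Rightarrow> 'r \<Rightarrow> 'a" where
  "group_shrink D \<gamma> B l = (let q = THE q. q \<in> D \<and> l \<in> q in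
     B l + (2 * \<gamma> / ((1 + 2 * \<gamma>) * real (card q))) *\<^sub>R (\<Sum>c\<in>q - {l}. B c - B l))"

lemma group_shrink_eq:
  assumes "partition_on A D" "q \<in> D" "l \<in> q"
  shows "group_shrink D \<gamma> B l
    = B l + (2 * \<gamma> / ((1 + 2 * \<gamma>) * real (card q))) *\<^sub>R (\<Sum>c\<in>q - {l}. B c - B l)"
  using partition_on_the_block[OF assms] by (simp add: group_shrink_def)

text \<open>The first-order optimality condition of the penalised problem, satisfied blockwise.\<close>

lemma group_shrink_residual:
  fixes B :: "'r \<Rightarrow> 'a::real_vector"
  assumes part: "partition_on A D" and q: "q \<in> D" "finite q" and l: "l \<in> q" and "\<gamma> \<ge> 0"
  shows "B l - group_shrink D \<gamma> B l
    = (2 * \<gamma> / real (card q)) *\<^sub>R (\<Sum>m\<in>q. group_shrink D \<gamma> B l - group_shrink D \<gamma> B m)"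
proof -
  define k where "k = real (card q)"
  define a where "a = 2 * \<gamma> / ((1 + 2 * \<gamma>) * k)"
  define S where "S = (\<Sum>m\<in>q. B m)"
  have "k > 0"
    using q partition_onD3[OF part] by (auto simp: k_def card_gt_0_iff)
  have shrink: "group_shrink D \<gamma> B m = B m + a *\<^sub>R (S - k *\<^sub>R B m)" if "m \<in> q" for m
  proof -
    have "(\<Sum>c\<in>q. B c - B m) = (\<Sum>c\<in>q - {m}. B c - B m)"
      using that q by (simp add: sum.remove)
    then have "(\<Sum>c\<in>q - {m}. B c - B m) = S - k *\<^sub>R B m"
      by (simp add: sum_subtractf sum_constant_scaleR S_def k_def)
    then show ?thesis by (simp add: group_shrink_eq[OF part q(1) that] a_def k_def)
  qed
  have "(\<Sum>m\<in>q. S - k *\<^sub>R B m) = 0"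
    by (simp add: sum_subtractf sum_constant_scaleR scaleR_sum_right[symmetric] S_def k_def)
  then have "(\<Sum>m\<in>q. group_shrink D \<gamma> B m) = S"
    by (simp add: shrink sum.distrib scaleR_sum_right[symmetric] S_def)
  then have "(\<Sum>m\<in>q. group_shrink D \<gamma> B l - group_shrink D \<gamma> B m)
      = k *\<^sub>R group_shrink D \<gamma> B l - S"
    by (simp add: sum_subtractf sum_constant_scaleR k_def)
  also have "\<dots> = (a * k - 1) *\<^sub>R (S - k *\<^sub>R B l)"
    by (simp add: shrink[OF l] algebra_simps)
  finally have "(\<Sum>m\<in>q. group_shrink D \<gamma> B l - group_shrink D \<gamma> B m)
      = (a * k - 1) *\<^sub>R (S - k *\<^sub>R B l)" .
  moreover have "2 * \<gamma> / k * (a * k - 1) = - a"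
  proof -
    have "k \<noteq> 0" "1 + 2 * \<gamma> \<noteq> 0" using \<open>k > 0\<close> \<open>\<gamma> \<ge> 0\<close> by auto
    then show ?thesis by (simp add: a_def divide_simps)
  qed
  ultimately show ?thesis
    by (simp add: shrink[OF l] k_def[symmetric])
qed

lemma sum_sum_antisym_mult_diff:
  fixes a :: "'r \<Rightarrow> 'r \<Rightarrow> real"
  assumes "\<And>l m. a l m = - a m l"
  shows "(\<Sum>l\<in>q. \<Sum>m\<in>q. a l m * (w l - w m)) = 2 * (\<Sum>l\<in>q. \<Sum>m\<in>q. a l m * w l)"
proof -
  have "(\<Sum>l\<in>q. \<Sum>m\<in>q. a l m * w m) = (\<Sum>l\<in>q. \<Sum>m\<in>q. a m l * w l)"
    by (rule sum.swap)
  also have "\<dots> = - (\<Sum>l\<in>q. \<Sum>m\<in>q. a l m * w l)"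
  proof -
    have "a m l * w l = - (a l m * w l)" for l m using assms[of m l] by simp
    then show ?thesis by (simp add: sum_negf[symmetric])
  qed
  finally show ?thesis by (simp add: right_diff_distrib sum_subtractf)
qed

definition pair_penalty :: "'a::real_inner \<Rightarrow> 'r set set \<Rightarrow> ('r \<Rightarrow> 'a) \<Rightarrow> real" where
  "pair_penalty v D B = (\<Sum>q\<in>D. 1 / real (card q) * (\<Sum>l\<in>q. \<Sum>m\<in>q. (v \<bullet> (B l - B m))\<^sup>2))"

lemma pair_penalty_nonneg: "0 \<le> pair_penalty v D B"
  unfolding pair_penalty_def by (intro sum_nonneg mult_nonneg_nonneg) auto

definition sample_loss ::
    "'a::real_inner \<Rightarrow> ('r::finite \<Rightarrow> real) \<Rightarrow> 'r set set \<Rightarrow> real \<Rightarrow> ('r \<Rightarrow> 'a) \<Rightarrow> real" where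
  "sample_loss v y D \<gamma> B = (\<Sum>c\<in>UNIV. (y c - v \<bullet> B c)\<^sup>2) + \<gamma> * pair_penalty v D B"

lemma group_shrink_residual_orthogonal:
  fixes B H :: "'r::finite \<Rightarrow> 'a::real_inner"
  assumes part: "partition_on UNIV D" and "\<gamma> \<ge> 0"
  defines "B0 \<equiv> group_shrink D \<gamma> B"
  shows "(\<Sum>c\<in>UNIV. (v \<bullet> (B c - B0 c)) * (v \<bullet> H c))
    = \<gamma> * (\<Sum>q\<in>D. 1 / real (card q) *
        (\<Sum>l\<in>q. \<Sum>m\<in>q. (v \<bullet> (B0 l - B0 m)) * (v \<bullet> (H l - H m))))"
proof -
  define a where "a l m = v \<bullet> (B0 l - B0 m)" for l m
  have anti: "a l m = - a m l" for l m by (simp add: a_def inner_diff_right)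
  have "(\<Sum>c\<in>q. (v \<bullet> (B c - B0 c)) * (v \<bullet> H c))
      = \<gamma> * (1 / real (card q) * (\<Sum>l\<in>q. \<Sum>m\<in>q. a l m * (v \<bullet> H l - v \<bullet> H m)))"
    if q: "q \<in> D" for q
  proof -
    have "(\<Sum>c\<in>q. (v \<bullet> (B c - B0 c)) * (v \<bullet> H c))
        = (2 * \<gamma> / real (card q)) * (\<Sum>l\<in>q. \<Sum>m\<in>q. a l m * (v \<bullet> H l))"
      using group_shrink_residual[OF part q finite _ \<open>\<gamma> \<ge> 0\<close>, of _ B]
      by (simp add: B0_def a_def inner_sum_right sum_distrib_left sum_distrib_right mult.assoc)
    then show ?thesis by (simp add: sum_sum_antisym_mult_diff[OF anti])
  qed
  then show ?thesis
    by (simp add: sum_partition_on[OF part] sum_distrib_left a_def inner_diff_right)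
qed

lemma sample_loss_group_shrink_add:
  fixes B H :: "'r::finite \<Rightarrow> 'a::real_inner" and v :: 'a and e :: "'r \<Rightarrow> real"
  assumes part: "partition_on UNIV D" and "\<gamma> \<ge> 0"
  defines "B0 \<equiv> group_shrink D \<gamma> B" and "y \<equiv> \<lambda>c. v \<bullet> B c + e c"
  shows "sample_loss v y D \<gamma> (\<lambda>c. B0 c + H c) = sample_loss v y D \<gamma> B0
     - 2 * (\<Sum>c\<in>UNIV. e c * (v \<bullet> H c)) + ((\<Sum>c\<in>UNIV. (v \<bullet> H c)\<^sup>2) + \<gamma> * pair_penalty v D H)"
proof -
  have fit_term: "(y c - v \<bullet> (B0 c + H c))\<^sup>2 = (y c - v \<bullet> B0 c)\<^sup>2
     - 2 * ((v \<bullet> (B c - B0 c)) * (v \<bullet> H c)) - 2 * (e c * (v \<bullet> H c)) + (v \<bullet> H c)\<^sup>2" for c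
    by (simp add: y_def inner_add_right inner_diff_right power2_eq_square algebra_simps)
  have fit: "(\<Sum>c\<in>UNIV. (y c - v \<bullet> (B0 c + H c))\<^sup>2) = (\<Sum>c\<in>UNIV. (y c - v \<bullet> B0 c)\<^sup>2)
     - 2 * (\<Sum>c\<in>UNIV. (v \<bullet> (B c - B0 c)) * (v \<bullet> H c))
     - 2 * (\<Sum>c\<in>UNIV. e c * (v \<bullet> H c)) + (\<Sum>c\<in>UNIV. (v \<bullet> H c)\<^sup>2)"
    unfolding fit_term by (simp only: sum.distrib sum_subtractf sum_distrib_left)
  have penalty_term: "(v \<bullet> ((B0 l + H l) - (B0 m + H m)))\<^sup>2 = (v \<bullet> (B0 l - B0 m))\<^sup>2
     + 2 * ((v \<bullet> (B0 l - B0 m)) * (v \<bullet> (H l - H m))) + (v \<bullet> (H l - H m))\<^sup>2" for l m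
    by (simp add: inner_add_right inner_diff_right power2_eq_square algebra_simps)
  have penalty: "pair_penalty v D (\<lambda>c. B0 c + H c) = pair_penalty v D B0
     + 2 * (\<Sum>q\<in>D. 1 / real (card q) *
        (\<Sum>l\<in>q. \<Sum>m\<in>q. (v \<bullet> (B0 l - B0 m)) * (v \<bullet> (H l - H m))))
     + pair_penalty v D H"
    unfolding pair_penalty_def penalty_term
    by (simp only: sum.distrib distrib_left sum_distrib_left mult.left_commute[of 2])
  have orth: "(\<Sum>c\<in>UNIV. (v \<bullet> (B c - B0 c)) * (v \<bullet> H c))
    = \<gamma> * (\<Sum>q\<in>D. 1 / real (card q) *
        (\<Sum>l\<in>q. \<Sum>m\<in>q. (v \<bullet> (B0 l - B0 m)) * (v \<bullet> (H l - H m))))"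
    unfolding B0_def by (rule group_shrink_residual_orthogonal[OF part \<open>\<gamma> \<ge> 0\<close>])
  show ?thesis
    unfolding sample_loss_def fit penalty orth by (simp add: algebra_simps)
qed

lemma indep_rv_imp_indep_var_compose:
  assumes "prob_space M" and indep: "indep_rv M S X T Y"
    and f: "f \<in> measurable S (borel :: real measure)" and g: "g \<in> measurable T (borel :: real measure)"
  shows "prob_space.indep_var M borel (\<lambda>\<omega>. f (X \<omega>)) borel (\<lambda>\<omega>. g (Y \<omega>))"
proof -
  interpret prob_space M by fact
  have X: "X \<in> measurable M S" and Y: "Y \<in> measurable M T"
    and sets_indep: "indep_set (sigma_sets (space M) {X -` A \<inter> space M | A. A \<in> sets S})
       (sigma_sets (space M) {Y -` A \<inter> space M | A. A \<in> sets T})"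
    using indep unfolding indep_rv_def by auto
  have preimages_compose: "{(\<lambda>\<omega>. h (Z \<omega>)) -` A \<inter> space M | A. A \<in> sets borel}
      \<subseteq> {Z -` A \<inter> space M | A. A \<in> sets U}"
    if Z: "Z \<in> measurable M U" and h: "h \<in> measurable U (borel :: real measure)"
    for Z U h
  proof safe
    fix A :: "real set" assume "A \<in> sets borel"
    then have "h -` A \<inter> space U \<in> sets U" using h by (auto simp: measurable_def)
    moreover have "(\<lambda>\<omega>. h (Z \<omega>)) -` A \<inter> space M = Z -` (h -` A \<inter> space U) \<inter> space M"
      using Z by (auto simp: measurable_def)
    ultimately show "\<exists>B. (\<lambda>\<omega>. h (Z \<omega>)) -` A \<inter> space M = Z -` B \<inter> space M \<and> B \<in> sets U"
      by blast
  qed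
  have "(\<lambda>\<omega>. f (X \<omega>)) \<in> borel_measurable M" "(\<lambda>\<omega>. g (Y \<omega>)) \<in> borel_measurable M"
    using X Y f g by measurable
  then show ?thesis
    unfolding indep_var_eq
    using sets_indep sigma_sets_mono'[OF preimages_compose[OF X f], of "space M"]
      sigma_sets_mono'[OF preimages_compose[OF Y g], of "space M"]
    unfolding indep_sets2_eq by blast
qed

definition square_integrable :: "'w measure \<Rightarrow> ('w \<Rightarrow> real) \<Rightarrow> bool" where
  "square_integrable M f \<longleftrightarrow> f \<in> borel_measurable M \<and> integrable M (\<lambda>\<omega>. (f \<omega>)\<^sup>2)"

lemma square_integrable_imp_integrable_sq:
  "square_integrable M f \<Longrightarrow> integrable M (\<lambda>\<omega>. (f \<omega>)\<^sup>2)"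
  by (simp add: square_integrable_def)

lemma square_integrable_imp_integrable_mult:
  assumes "square_integrable M f" "square_integrable M g"
  shows "integrable M (\<lambda>\<omega>. f \<omega> * g \<omega>)"
proof (rule Bochner_Integration.integrable_bound)
  show "integrable M (\<lambda>\<omega>. (f \<omega>)\<^sup>2 + (g \<omega>)\<^sup>2)"
    using assms by (auto simp: square_integrable_def)
  show "(\<lambda>\<omega>. f \<omega> * g \<omega>) \<in> borel_measurable M"
    using assms by (auto simp: square_integrable_def)
  have "\<bar>f \<omega> * g \<omega>\<bar> \<le> (f \<omega>)\<^sup>2 + (g \<omega>)\<^sup>2" for \<omega>
  proof -
    have "2 * (\<bar>f \<omega>\<bar> * \<bar>g \<omega>\<bar>) \<le> (f \<omega>)\<^sup>2 + (g \<omega>)\<^sup>2"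
      using sum_squares_bound[of "\<bar>f \<omega>\<bar>" "\<bar>g \<omega>\<bar>"] by (simp add: mult.assoc)
    moreover have "0 \<le> \<bar>f \<omega>\<bar> * \<bar>g \<omega>\<bar>" by simp
    ultimately show ?thesis unfolding abs_mult by linarith
  qed
  then show "AE \<omega> in M. norm (f \<omega> * g \<omega>) \<le> norm ((f \<omega>)\<^sup>2 + (g \<omega>)\<^sup>2)"
    by auto
qed

lemma square_integrable_add:
  assumes "square_integrable M f" "square_integrable M g"
  shows "square_integrable M (\<lambda>\<omega>. f \<omega> + g \<omega>)"
proof -
  have "integrable M (\<lambda>\<omega>. (f \<omega>)\<^sup>2 + 2 * (f \<omega> * g \<omega>) + (g \<omega>)\<^sup>2)"
    using assms square_integrable_imp_integrable_mult[OF assms]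
    by (auto simp: square_integrable_def)
  then show ?thesis
    using assms by (auto simp: square_integrable_def power2_sum algebra_simps)
qed

lemma square_integrable_cmult:
  "square_integrable M f \<Longrightarrow> square_integrable M (\<lambda>\<omega>. c * f \<omega>)"
  by (auto simp: square_integrable_def power_mult_distrib)

lemma square_integrable_diff:
  assumes "square_integrable M f" "square_integrable M g"
  shows "square_integrable M (\<lambda>\<omega>. f \<omega> - g \<omega>)"
  using square_integrable_add[OF assms(1) square_integrable_cmult[OF assms(2), of "-1"]] by simp

lemma square_integrable_sum:
  "(\<And>i. i \<in> I \<Longrightarrow> square_integrable M (f i)) \<Longrightarrow> square_integrable M (\<lambda>\<omega>. \<Sum>i\<in>I. f i \<omega>)"
  by (induction I rule: infinite_finite_induct)
    (auto simp: square_integrable_add, simp_all add: square_integrable_def)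

lemma square_integrable_inner:
  fixes X :: "'w \<Rightarrow> real^'p::finite"
  assumes "\<And>j. square_integrable M (\<lambda>\<omega>. X \<omega> $ j)"
  shows "square_integrable M (\<lambda>\<omega>. X \<omega> \<bullet> v)"
  using square_integrable_sum[of UNIV M "\<lambda>j \<omega>. v $ j * X \<omega> $ j"]
  by (simp add: assms square_integrable_cmult inner_vec_def mult.commute)

lemma (in prob_space) expectation_noise_inner_eq_0:
  fixes X :: "'a \<Rightarrow> real^'p::finite" and E :: "'a \<Rightarrow> real^'r::finite"
  assumes X: "\<And>j. square_integrable M (\<lambda>\<omega>. X \<omega> $ j)"
    and E: "\<And>c. square_integrable M (\<lambda>\<omega>. E \<omega> $ c)"
    and mean: "\<And>c. expectation (\<lambda>\<omega>. E \<omega> $ c) = 0"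
    and indep: "\<And>j c. indep_var borel (\<lambda>\<omega>. X \<omega> $ j) borel (\<lambda>\<omega>. E \<omega> $ c)"
  shows "expectation (\<lambda>\<omega>. \<Sum>c\<in>UNIV. E \<omega> $ c * (X \<omega> \<bullet> H c)) = 0"
proof -
  have integrable: "integrable M (\<lambda>\<omega>. f \<omega>)" if "square_integrable M f" for f
    using that square_integrable_imp_integrable[of f] unfolding square_integrable_def by blast
  have uncorrelated: "expectation (\<lambda>\<omega>. X \<omega> $ j * E \<omega> $ c) = 0" for j c
    using indep_var_lebesgue_integral[OF indep integrable[OF X] integrable[OF E]] mean by simp
  have "expectation (\<lambda>\<omega>. E \<omega> $ c * (X \<omega> \<bullet> H c)) = 0" for c
  proof -
    have "expectation (\<lambda>\<omega>. E \<omega> $ c * (X \<omega> \<bullet> H c))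
        = expectation (\<lambda>\<omega>. \<Sum>j\<in>UNIV. H c $ j * (X \<omega> $ j * E \<omega> $ c))"
      by (simp add: inner_vec_def sum_distrib_left mult_ac)
    also have "\<dots> = (\<Sum>j\<in>UNIV. H c $ j * expectation (\<lambda>\<omega>. X \<omega> $ j * E \<omega> $ c))"
      by (subst Bochner_Integration.integral_sum)
        (auto intro!: square_integrable_imp_integrable_mult X E)
    finally show ?thesis by (simp add: uncorrelated)
  qed
  then show ?thesis
    by (subst Bochner_Integration.integral_sum)
      (auto intro!: square_integrable_imp_integrable_mult E square_integrable_inner X)
qed

lemma sum_sample_loss:
  "(\<Sum>i\<in>I. sample_loss (v i) (y i) D \<gamma> B)
    = (\<Sum>i\<in>I. \<Sum>c\<in>UNIV. (y i c - v i \<bullet> B c)\<^sup>2)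
      + \<gamma> * (\<Sum>q\<in>D. 1 / real (card q) * (\<Sum>l\<in>q. \<Sum>m\<in>q. \<Sum>i\<in>I. (v i \<bullet> (B l - B m))\<^sup>2))"
proof -
  have "(\<Sum>i\<in>I. pair_penalty (v i) D B)
      = (\<Sum>q\<in>D. 1 / real (card q) * (\<Sum>l\<in>q. \<Sum>m\<in>q. \<Sum>i\<in>I. (v i \<bullet> (B l - B m))\<^sup>2))"
    unfolding pair_penalty_def
    by (subst sum.swap) (simp add: sum_distrib_left sum.swap[of _ I])
  then show ?thesis
    by (simp only: sample_loss_def sum.distrib sum_distrib_left[symmetric])
qed

definition quad_form :: "('p::finite \<Rightarrow> 'p \<Rightarrow> real) \<Rightarrow> real^'p \<Rightarrow> real" where
  "quad_form G v = (\<Sum>j\<in>UNIV. \<Sum>k\<in>UNIV. v $ j * G j k * v $ k)"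

lemma pos_def_quad_form_nonneg: "pos_def G \<Longrightarrow> 0 \<le> quad_form G v"
  by (cases "v = 0") (auto simp: pos_def_def quad_form_def less_imp_le)

lemma pos_def_quad_form_eq_0_iff: "pos_def G \<Longrightarrow> quad_form G v = 0 \<longleftrightarrow> v = 0"
  by (auto simp: pos_def_def quad_form_def)

lemma quad_form_divide: "quad_form (\<lambda>j k. G j k / c) v = quad_form G v / c"
  by (simp add: quad_form_def sum_divide_distrib)

lemma sum_sq_inner_eq_quad_form:
  "(\<Sum>i\<in>I. (v i \<bullet> h)\<^sup>2) = quad_form (\<lambda>j k. \<Sum>i\<in>I. v i $ j * v i $ k) h"
proof -
  have "(\<Sum>i\<in>I. (v i \<bullet> h)\<^sup>2) = (\<Sum>i\<in>I. \<Sum>j\<in>UNIV. \<Sum>k\<in>UNIV. h $ j * (v i $ j * v i $ k) * h $ k)"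
    by (simp add: inner_vec_def power2_eq_square sum_product mult_ac)
  also have "\<dots> = (\<Sum>j\<in>UNIV. \<Sum>k\<in>UNIV. \<Sum>i\<in>I. h $ j * (v i $ j * v i $ k) * h $ k)"
    by (subst sum.swap) (simp add: sum.swap[of _ I])
  finally show ?thesis
    by (simp add: quad_form_def sum_distrib_left sum_distrib_right)
qed

lemma integral_quad_form:
  assumes "\<And>j k. integrable M (F j k)"
  shows "quad_form (\<lambda>j k. integral\<^sup>L M (F j k)) v = integral\<^sup>L M (\<lambda>\<omega>. quad_form (\<lambda>j k. F j k \<omega>) v)"
  unfolding quad_form_def using assms by simp

lemma integrable_sample_loss:
  fixes X :: "'w \<Rightarrow> real^'p::finite" and Y :: "'w \<Rightarrow> 'r::finite \<Rightarrow> real"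
  assumes "\<And>j. square_integrable M (\<lambda>\<omega>. X \<omega> $ j)" and "\<And>c. square_integrable M (\<lambda>\<omega>. Y \<omega> c)"
  shows "integrable M (\<lambda>\<omega>. sample_loss (X \<omega>) (Y \<omega>) D \<gamma> B)"
  unfolding sample_loss_def pair_penalty_def
  by (intro Bochner_Integration.integrable_add Bochner_Integration.integrable_sum
      Bochner_Integration.integrable_mult_right square_integrable_imp_integrable_sq
      square_integrable_diff square_integrable_inner assms)

locale multivariate_linear_model = prob_space M
  for M :: "'w measure" and n :: nat
    and x :: "nat \<Rightarrow> 'w \<Rightarrow> real^'p::finite" and eps :: "nat \<Rightarrow> 'w \<Rightarrow> real^'r::finite" +
  assumes n_pos: "n \<ge> 1"
    and x_rv: "\<And>i. i < n \<Longrightarrow> x i \<in> borel_measurable M"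
    and eps_rv: "\<And>i. i < n \<Longrightarrow> eps i \<in> borel_measurable M"
    and x_L2: "\<And>i j. i < n \<Longrightarrow> integrable M (\<lambda>\<omega>. (x i \<omega> $ j)\<^sup>2)"
    and eps_L2: "\<And>i c. i < n \<Longrightarrow> integrable M (\<lambda>\<omega>. (eps i \<omega> $ c)\<^sup>2)"
    and eps_mean: "\<And>i c. i < n \<Longrightarrow> expectation (\<lambda>\<omega>. eps i \<omega> $ c) = 0"
    and indep: "indep_rv M
        (\<Pi>\<^sub>M i\<in>{..<n}. (borel :: (real^'p) measure)) (\<lambda>\<omega>. \<lambda>i\<in>{..<n}. x i \<omega>)
        (\<Pi>\<^sub>M i\<in>{..<n}. (borel :: (real^'r) measure)) (\<lambda>\<omega>. \<lambda>i\<in>{..<n}. eps i \<omega>)"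
begin

lemma x_square_integrable: "i < n \<Longrightarrow> square_integrable M (\<lambda>\<omega>. x i \<omega> $ j)"
  using measurable_compose[OF x_rv borel_measurable_nth] x_L2
  by (simp add: square_integrable_def)

lemma eps_square_integrable: "i < n \<Longrightarrow> square_integrable M (\<lambda>\<omega>. eps i \<omega> $ c)"
  using measurable_compose[OF eps_rv borel_measurable_nth] eps_L2
  by (simp add: square_integrable_def)

lemma resp_square_integrable: "i < n \<Longrightarrow> square_integrable M (\<lambda>\<omega>. resp x eps Bstar i \<omega> c)"
  unfolding resp_def
  by (intro square_integrable_add square_integrable_inner x_square_integrable eps_square_integrable)

lemma indep_var_x_eps:
  assumes "i < n"
  shows "indep_var borel (\<lambda>\<omega>. x i \<omega> $ j) borel (\<lambda>\<omega>. eps i \<omega> $ c)"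
proof -
  have "(\<lambda>h. h i) \<in> (\<Pi>\<^sub>M i\<in>{..<n}. (borel :: (real^'p) measure)) \<rightarrow>\<^sub>M borel"
    "(\<lambda>h. h i) \<in> (\<Pi>\<^sub>M i\<in>{..<n}. (borel :: (real^'r) measure)) \<rightarrow>\<^sub>M borel"
    using assms by (auto intro: measurable_component_singleton)
  then have "(\<lambda>h. h i $ j) \<in> borel_measurable (\<Pi>\<^sub>M i\<in>{..<n}. (borel :: (real^'p) measure))"
    "(\<lambda>h. h i $ c) \<in> borel_measurable (\<Pi>\<^sub>M i\<in>{..<n}. (borel :: (real^'r) measure))"
    by (auto intro: measurable_compose[OF _ borel_measurable_nth])
  from indep_rv_imp_indep_var_compose[OF prob_space_axioms indep this] show ?thesis
    using assms by simp
qed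

lemma objective_eq_sum_expectation:
  "objective M n x eps Bstar D \<gamma> B
    = (\<Sum>i<n. expectation (\<lambda>\<omega>. sample_loss (x i \<omega>) (resp x eps Bstar i \<omega>) D \<gamma> B)) / (2 * real n)"
proof -
  have "objective M n x eps Bstar D \<gamma> B
      = expectation (\<lambda>\<omega>. (\<Sum>i<n. sample_loss (x i \<omega>) (resp x eps Bstar i \<omega>) D \<gamma> B) / (2 * real n))"
    unfolding objective_def sum_sample_loss by (simp add: add_divide_distrib)
  then show ?thesis
    by (simp add: integrable_sample_loss x_square_integrable resp_square_integrable)
qed

lemma sum_expectation_sq_inner:
  "(\<Sum>i<n. expectation (\<lambda>\<omega>. (x i \<omega> \<bullet> h)\<^sup>2)) = real n * quad_form (gram M n x) h"
proof -
  have "quad_form (gram M n x) h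
      = expectation (\<lambda>\<omega>. quad_form (\<lambda>j k. (\<Sum>i<n. x i \<omega> $ j * x i \<omega> $ k) / real n) h)"
    unfolding gram_def
    by (intro integral_quad_form Bochner_Integration.integrable_divide
        Bochner_Integration.integrable_sum square_integrable_imp_integrable_mult x_square_integrable)
      auto
  also have "\<dots> = expectation (\<lambda>\<omega>. (\<Sum>i<n. (x i \<omega> \<bullet> h)\<^sup>2)) / real n"
    by (simp add: quad_form_divide sum_sq_inner_eq_quad_form)
  also have "\<dots> = (\<Sum>i<n. expectation (\<lambda>\<omega>. (x i \<omega> \<bullet> h)\<^sup>2)) / real n"
    by (subst Bochner_Integration.integral_sum)
      (auto intro!: square_integrable_imp_integrable_sq square_integrable_inner x_square_integrable)
  finally show ?thesis using n_pos by simp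
qed

lemma integrable_excess_loss:
  "i < n \<Longrightarrow> integrable M (\<lambda>\<omega>. (\<Sum>c\<in>UNIV. (x i \<omega> \<bullet> H c)\<^sup>2) + \<gamma> * pair_penalty (x i \<omega>) D H)"
  unfolding pair_penalty_def
  by (intro Bochner_Integration.integrable_add Bochner_Integration.integrable_sum
      Bochner_Integration.integrable_mult_right square_integrable_imp_integrable_sq
      square_integrable_inner x_square_integrable)

lemma expectation_sample_loss_group_shrink_add:
  fixes Bstar H :: "'r \<Rightarrow> real^'p"
  assumes part: "partition_on UNIV D" and "\<gamma> \<ge> 0" and i: "i < n"
  defines "B0 \<equiv> group_shrink D \<gamma> Bstar"
  shows "expectation (\<lambda>\<omega>. sample_loss (x i \<omega>) (resp x eps Bstar i \<omega>) D \<gamma> (\<lambda>c. B0 c + H c))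
    = expectation (\<lambda>\<omega>. sample_loss (x i \<omega>) (resp x eps Bstar i \<omega>) D \<gamma> B0)
      + expectation (\<lambda>\<omega>. (\<Sum>c\<in>UNIV. (x i \<omega> \<bullet> H c)\<^sup>2) + \<gamma> * pair_penalty (x i \<omega>) D H)"
proof -
  have resp: "resp x eps Bstar i \<omega> = (\<lambda>c. x i \<omega> \<bullet> Bstar c + eps i \<omega> $ c)" for \<omega>
    by (simp add: fun_eq_iff resp_def)
  have noise: "expectation (\<lambda>\<omega>. \<Sum>c\<in>UNIV. eps i \<omega> $ c * (x i \<omega> \<bullet> H c)) = 0"
    using i by (intro expectation_noise_inner_eq_0 x_square_integrable eps_square_integrable
        eps_mean indep_var_x_eps)
  have "integrable M (\<lambda>\<omega>. sample_loss (x i \<omega>) (resp x eps Bstar i \<omega>) D \<gamma> B0)"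
    using i by (intro integrable_sample_loss x_square_integrable resp_square_integrable)
  moreover have "integrable M (\<lambda>\<omega>. \<Sum>c\<in>UNIV. eps i \<omega> $ c * (x i \<omega> \<bullet> H c))"
    using i by (intro Bochner_Integration.integrable_sum square_integrable_imp_integrable_mult
        eps_square_integrable square_integrable_inner x_square_integrable)
  moreover have "integrable M (\<lambda>\<omega>. (\<Sum>c\<in>UNIV. (x i \<omega> \<bullet> H c)\<^sup>2) + \<gamma> * pair_penalty (x i \<omega>) D H)"
    using i by (rule integrable_excess_loss)
  ultimately show ?thesis
    unfolding resp B0_def sample_loss_group_shrink_add[OF part \<open>\<gamma> \<ge> 0\<close>]
    using noise by simp
qed

lemma objective_group_shrink_add_ge:
  fixes Bstar H :: "'r \<Rightarrow> real^'p"
  assumes part: "partition_on UNIV D" and "\<gamma> \<ge> 0"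
  defines "B0 \<equiv> group_shrink D \<gamma> Bstar"
  shows "objective M n x eps Bstar D \<gamma> B0 + (\<Sum>c\<in>UNIV. quad_form (gram M n x) (H c)) / 2
    \<le> objective M n x eps Bstar D \<gamma> (\<lambda>c. B0 c + H c)"
proof -
  let ?loss = "\<lambda>i B. expectation (\<lambda>\<omega>. sample_loss (x i \<omega>) (resp x eps Bstar i \<omega>) D \<gamma> B)"
  have excess: "?loss i B0 + (\<Sum>c\<in>UNIV. expectation (\<lambda>\<omega>. (x i \<omega> \<bullet> H c)\<^sup>2))
      \<le> ?loss i (\<lambda>c. B0 c + H c)" if i: "i < n" for i
  proof -
    have "(\<Sum>c\<in>UNIV. expectation (\<lambda>\<omega>. (x i \<omega> \<bullet> H c)\<^sup>2))
        = expectation (\<lambda>\<omega>. \<Sum>c\<in>UNIV. (x i \<omega> \<bullet> H c)\<^sup>2)"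
      using i by (subst Bochner_Integration.integral_sum)
        (auto intro!: square_integrable_imp_integrable_sq square_integrable_inner x_square_integrable)
    also have "\<dots> \<le> expectation (\<lambda>\<omega>. (\<Sum>c\<in>UNIV. (x i \<omega> \<bullet> H c)\<^sup>2) + \<gamma> * pair_penalty (x i \<omega>) D H)"
      using i \<open>\<gamma> \<ge> 0\<close>
      by (intro integral_mono integrable_excess_loss Bochner_Integration.integrable_sum
          square_integrable_imp_integrable_sq square_integrable_inner x_square_integrable)
        (auto intro!: mult_nonneg_nonneg pair_penalty_nonneg)
    finally show ?thesis
      using expectation_sample_loss_group_shrink_add[OF part \<open>\<gamma> \<ge> 0\<close> i, of Bstar H]
      by (simp add: B0_def)
  qed
  have "(\<Sum>i<n. ?loss i B0) + real n * (\<Sum>c\<in>UNIV. quad_form (gram M n x) (H c))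
      \<le> (\<Sum>i<n. ?loss i (\<lambda>c. B0 c + H c))"
  proof -
    have "(\<Sum>i<n. \<Sum>c\<in>UNIV. expectation (\<lambda>\<omega>. (x i \<omega> \<bullet> H c)\<^sup>2))
        = real n * (\<Sum>c\<in>UNIV. quad_form (gram M n x) (H c))"
      by (subst sum.swap) (simp add: sum_expectation_sq_inner sum_distrib_left)
    moreover have "(\<Sum>i<n. ?loss i B0 + (\<Sum>c\<in>UNIV. expectation (\<lambda>\<omega>. (x i \<omega> \<bullet> H c)\<^sup>2)))
        \<le> (\<Sum>i<n. ?loss i (\<lambda>c. B0 c + H c))"
      by (rule sum_mono) (simp add: excess)
    ultimately show ?thesis by (simp add: sum.distrib)
  qed
  then show ?thesis
    using n_pos by (simp add: objective_eq_sum_expectation divide_simps mult.commute)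
qed

end

theorem corollary1:
  fixes M :: "'w measure" and n s :: nat
    and x :: "nat \<Rightarrow> 'w \<Rightarrow> real^'p::finite"
    and eps :: "nat \<Rightarrow> 'w \<Rightarrow> real^'r::finite"
    and Bstar Bhat :: "'r \<Rightarrow> real^'p"
    and D :: "'r set set" and \<gamma> :: real
  assumes "prob_space M" and "n \<ge> 1"
    and sparse: "nnz Bstar = s"
    and x_rv: "\<And>i. i < n \<Longrightarrow> x i \<in> borel_measurable M"
    and eps_rv: "\<And>i. i < n \<Longrightarrow> eps i \<in> borel_measurable M"
    and x_L2: "\<And>i j. i < n \<Longrightarrow> integrable M (\<lambda>\<omega>. (x i \<omega> $ j)\<^sup>2)"
    and eps_L2: "\<And>i c. i < n \<Longrightarrow> integrable M (\<lambda>\<omega>. (eps i \<omega> $ c)\<^sup>2)"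
    and eps_mean: "\<And>i c. i < n \<Longrightarrow> integral\<^sup>L M (\<lambda>\<omega>. eps i \<omega> $ c) = 0"
    and indep: "indep_rv M
        (\<Pi>\<^sub>M i\<in>{..<n}. (borel :: (real^'p) measure)) (\<lambda>\<omega>. \<lambda>i\<in>{..<n}. x i \<omega>)
        (\<Pi>\<^sub>M i\<in>{..<n}. (borel :: (real^'r) measure)) (\<lambda>\<omega>. \<lambda>i\<in>{..<n}. eps i \<omega>)"
    and pd: "pos_def (gram M n x)"
    and part: "partition_on UNIV D"
    and "\<gamma> \<ge> 0"
    and argmin: "\<forall>B. objective M n x eps Bstar D \<gamma> Bhat \<le> objective M n x eps Bstar D \<gamma> B"
  shows "\<forall>q\<in>D. \<forall>l\<in>q. Bhat l = Bstar l +
           (2 * \<gamma> / ((1 + 2 * \<gamma>) * real (card q))) *\<^sub>R (\<Sum>c\<in>q - {l}. Bstar c - Bstar l)"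
proof -
  interpret multivariate_linear_model M n x eps
    using assms by (simp add: multivariate_linear_model_def multivariate_linear_model_axioms_def)
  define B0 where "B0 = group_shrink D \<gamma> Bstar"
  define H where "H c = Bhat c - B0 c" for c
  have "Bhat = (\<lambda>c. B0 c + H c)" by (simp add: H_def fun_eq_iff)
  then have "objective M n x eps Bstar D \<gamma> B0 + (\<Sum>c\<in>UNIV. quad_form (gram M n x) (H c)) / 2
      \<le> objective M n x eps Bstar D \<gamma> Bhat"
    using objective_group_shrink_add_ge[OF part \<open>\<gamma> \<ge> 0\<close>] by (simp add: B0_def)
  moreover have "objective M n x eps Bstar D \<gamma> Bhat \<le> objective M n x eps Bstar D \<gamma> B0"
    using argmin by blast
  ultimately have "(\<Sum>c\<in>UNIV. quad_form (gram M n x) (H c)) \<le> 0" by simp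
  then have "quad_form (gram M n x) (H c) = 0" for c
    using pos_def_quad_form_nonneg[OF pd] sum_nonneg_eq_0_iff[of UNIV "\<lambda>c. quad_form (gram M n x) (H c)"]
    by (simp add: order.antisym sum_nonneg)
  then have "Bhat = B0" by (simp add: pos_def_quad_form_eq_0_iff[OF pd] H_def fun_eq_iff)
  then show ?thesis by (simp add: B0_def group_shrink_eq[OF part])
qed

end
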